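(* Let $G$ be a simple graph with at least one edge, with edge set $E$ and any orientation of its edges. Then $\mathcal{H}(G)$ is reducible if and only if there is a partition $E=E_1\cup E_2$ (into two nonempty disjoint sets) such that for every pair of edges $e_1\in E_1$ and $e_2\in E_2$, either $e_1$ and $e_2$ are two edges of a common triangle of $G$, or $e_1$ and $e_2$ share no vertex.
   Context: For an oriented edge $e$ write $e^-$ for its tail and $e^+$ for its head. For distinct edges $e,e'$: $e\leftrightarrow e'$ means $e^+=e'^-$ or $e'^+=e^-$; $e\overset{\pm}{\sim}e'$ means $e^+=e'^+$ or $e^-=e'^-$; $e\vartriangle e'$ means $e,e'$ are two edges of a common triangle of $G$. $\triangle(e)$ is the number of triangles containing $e$. The Helmholtzian matrix $\mathcal{H}(G)=(h_{ee'})$ is indexed by edges, with $h_{ee}=\triangle(e)+2$, and for $e\ne e'$: $h_{ee'}=-1$ if $e\leftrightarrow e'$ and not $e\vartriangle e'$; $h_{ee'}=1$ if $e\overset{\pm}{\sim}e'$ and not $e\vartriangle e'$; $h_{ee'}=0$ otherwise. A symmetric square matrix $M$ is reducible if there is a permutation matrix $P$ with $P^{-1}MP=\begin{pmatrix}E&O\\O&F\end{pmatrix}$ for square (nonempty) blocks $E,F$; otherwise it is irreducible. *)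

theory Defs
  imports "Jordan_Normal_Form.Matrix" "HOL-Combinatorics.Permutations"
begin

text \<open>An oriented simple graph: vertex set V, oriented edge set E (pairs (tail, head)),
  no loops, and at most one orientation per unordered pair.\<close>
definition oriented_simple_graph :: "'v set \<Rightarrow> ('v \<times> 'v) set \<Rightarrow> bool" where
  "oriented_simple_graph V E \<longleftrightarrow> finite V \<and> E \<subseteq> V \<times> V \<and>
     (\<forall>(u,v)\<in>E. u \<noteq> v) \<and> (\<forall>(u,v)\<in>E. (v,u) \<notin> E)"

definition adj :: "('v \<times> 'v) set \<Rightarrow> 'v \<Rightarrow> 'v \<Rightarrow> bool" where
  "adj E u v \<longleftrightarrow> (u,v) \<in> E \<or> (v,u) \<in> E"

definition is_triangle :: "('v \<times> 'v) set \<Rightarrow> 'v set \<Rightarrow> bool" where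
  "is_triangle E T \<longleftrightarrow> (\<exists>a b c. T = {a,b,c} \<and> a \<noteq> b \<and> b \<noteq> c \<and> a \<noteq> c \<and>
      adj E a b \<and> adj E b c \<and> adj E a c)"

definition edge_in_triangle :: "('v \<times> 'v) \<Rightarrow> 'v set \<Rightarrow> bool" where
  "edge_in_triangle e T \<longleftrightarrow> fst e \<in> T \<and> snd e \<in> T"

definition num_triangles :: "('v \<times> 'v) set \<Rightarrow> ('v \<times> 'v) \<Rightarrow> nat" where
  "num_triangles E e = card {T. is_triangle E T \<and> edge_in_triangle e T}"

definition head_tail :: "('v \<times> 'v) \<Rightarrow> ('v \<times> 'v) \<Rightarrow> bool" where
  "head_tail e e' \<longleftrightarrow> snd e = fst e' \<or> snd e' = fst e"

definition same_end :: "('v \<times> 'v) \<Rightarrow> ('v \<times> 'v) \<Rightarrow> bool" where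
  "same_end e e' \<longleftrightarrow> snd e = snd e' \<or> fst e = fst e'"

definition tri_rel :: "('v \<times> 'v) set \<Rightarrow> ('v \<times> 'v) \<Rightarrow> ('v \<times> 'v) \<Rightarrow> bool" where
  "tri_rel E e e' \<longleftrightarrow> e \<noteq> e' \<and> (\<exists>T. is_triangle E T \<and> edge_in_triangle e T \<and> edge_in_triangle e' T)"

definition helm_entry :: "('v \<times> 'v) set \<Rightarrow> ('v \<times> 'v) \<Rightarrow> ('v \<times> 'v) \<Rightarrow> int" where
  "helm_entry E e e' =
    (if e = e' then int (num_triangles E e) + 2
     else if head_tail e e' \<and> \<not> tri_rel E e e' then -1
     else if same_end e e' \<and> \<not> tri_rel E e e' then 1
     else 0)"

definition helmholtzian :: "('v \<times> 'v) set \<Rightarrow> ('v \<times> 'v) list \<Rightarrow> int mat" where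
  "helmholtzian E es = mat (length es) (length es) (\<lambda>(i,j). helm_entry E (es ! i) (es ! j))"

definition permutation_mat :: "nat \<Rightarrow> 'a :: {zero,one} mat \<Rightarrow> bool" where
  "permutation_mat n P \<longleftrightarrow> (\<exists>\<sigma>. \<sigma> permutes {..<n} \<and>
      P = mat n n (\<lambda>(i,j). if \<sigma> i = j then 1 else 0))"

definition reducible_mat :: "'a :: comm_ring_1 mat \<Rightarrow> bool" where
  "reducible_mat M \<longleftrightarrow> (\<exists>n P Pinv k l E F.
      M \<in> carrier_mat n n \<and> permutation_mat n P \<and>
      inverts_mat P Pinv \<and> inverts_mat Pinv P \<and>
      0 < k \<and> 0 < l \<and> E \<in> carrier_mat k k \<and> F \<in> carrier_mat l l \<and>
      Pinv * M * P = four_block_mat E (0\<^sub>m k l) (0\<^sub>m l k) F)"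

end

theory Submission
  imports Defs
begin

(* Reducibility depends only on the zero pattern of a square matrix: conjugating by a permutation
   matrix reorders the indices, so M is reducible iff the index set splits into two nonempty parts
   S and S' with M vanishing on S x S' and on S' x S. For the Helmholtzian, an off-diagonal entry
   vanishes exactly when the two edges lie in a common triangle or share no vertex, and the
   entries are symmetric; the bijection between indices and edges turns such index splits into
   the edge partitions of the statement. *)

definition perm_mat :: "nat \<Rightarrow> (nat \<Rightarrow> nat) \<Rightarrow> 'a :: {zero,one} mat" where
  "perm_mat n \<sigma> = mat n n (\<lambda>(i,j). if \<sigma> i = j then 1 else 0)"

lemma perm_mat_carrier: "perm_mat n \<sigma> \<in> carrier_mat n n"
  by (simp add: perm_mat_def)

lemma dim_perm_mat [simp]: "dim_row (perm_mat n \<sigma>) = n" "dim_col (perm_mat n \<sigma>) = n"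
  by (simp_all add: perm_mat_def)

lemma permutation_mat_iff: "permutation_mat n P \<longleftrightarrow> (\<exists>\<sigma>. \<sigma> permutes {..<n} \<and> P = perm_mat n \<sigma>)"
  by (simp add: permutation_mat_def perm_mat_def)

lemma index_perm_mat_mult:
  assumes "\<sigma> permutes {..<n}" "B \<in> carrier_mat n m" "i < n" "j < m"
  shows "(perm_mat n \<sigma> * B) $$ (i, j) = (B $$ (\<sigma> i, j) :: 'a :: semiring_1)"
proof -
  have "\<sigma> i < n" using permutes_in_image[OF assms(1)] assms(3) by simp
  have "(perm_mat n \<sigma> * B) $$ (i, j) = (\<Sum>k = 0..<n. (if \<sigma> i = k then 1 else 0) * B $$ (k, j))"
    using assms(2-4) by (simp add: perm_mat_def scalar_prod_def)
  also have "\<dots> = (\<Sum>k = 0..<n. if k = \<sigma> i then B $$ (k, j) else 0)"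
    by (rule sum.cong) auto
  finally show ?thesis using \<open>\<sigma> i < n\<close> by simp
qed

lemma index_mult_perm_mat:
  assumes "\<sigma> permutes {..<n}" "M \<in> carrier_mat m n" "i < m" "j < n"
  shows "(M * perm_mat n \<sigma>) $$ (i, \<sigma> j) = (M $$ (i, j) :: 'a :: semiring_1)"
proof -
  have "\<sigma> j < n" using permutes_in_image[OF assms(1)] assms(4) by simp
  have "(M * perm_mat n \<sigma>) $$ (i, \<sigma> j) = (\<Sum>k = 0..<n. M $$ (i, k) * (if \<sigma> k = \<sigma> j then 1 else 0))"
    using assms(2,3) \<open>\<sigma> j < n\<close> by (simp add: perm_mat_def scalar_prod_def)
  also have "\<dots> = (\<Sum>k = 0..<n. if k = j then M $$ (i, k) else 0)"
    using permutes_inj[OF assms(1)] by (intro sum.cong) (auto dest: injD)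
  finally show ?thesis using assms(4) by simp
qed

lemma perm_mat_mult:
  assumes "\<sigma> permutes {..<n}" "\<tau> permutes {..<n}"
  shows "perm_mat n \<sigma> * perm_mat n \<tau> = (perm_mat n (\<tau> \<circ> \<sigma>) :: 'a :: semiring_1 mat)"
proof (rule eq_matI)
  fix i j assume "i < dim_row (perm_mat n (\<tau> \<circ> \<sigma>) :: 'a mat)" "j < dim_col (perm_mat n (\<tau> \<circ> \<sigma>) :: 'a mat)"
  then have "i < n" "j < n" by (simp_all add: perm_mat_def)
  then have "(perm_mat n \<sigma> * perm_mat n \<tau>) $$ (i, j) = (perm_mat n \<tau> $$ (\<sigma> i, j) :: 'a)"
    by (rule index_perm_mat_mult[OF assms(1) perm_mat_carrier])
  also have "\<dots> = perm_mat n (\<tau> \<circ> \<sigma>) $$ (i, j)"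
    using permutes_in_image[OF assms(1)] \<open>i < n\<close> \<open>j < n\<close> by (simp add: perm_mat_def)
  finally show "(perm_mat n \<sigma> * perm_mat n \<tau>) $$ (i, j) = (perm_mat n (\<tau> \<circ> \<sigma>) $$ (i, j) :: 'a)" .
qed simp_all

lemma perm_mat_id: "perm_mat n id = 1\<^sub>m n"
  by (rule eq_matI) (auto simp: perm_mat_def)

lemma perm_mat_mult_inv:
  assumes "\<sigma> permutes {..<n}"
  shows "perm_mat n \<sigma> * perm_mat n (Hilbert_Choice.inv \<sigma>) = (1\<^sub>m n :: 'a :: semiring_1 mat)"
    and "perm_mat n (Hilbert_Choice.inv \<sigma>) * perm_mat n \<sigma> = (1\<^sub>m n :: 'a :: semiring_1 mat)"
  using assms permutes_inv[OF assms]
  by (simp_all add: perm_mat_mult permutes_inv_o perm_mat_id)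

lemma index_perm_mat_conj:
  assumes \<tau>: "\<tau> permutes {..<n}" and M: "M \<in> carrier_mat n n" and "i < n" "j < n"
  shows "(perm_mat n \<tau> * M * perm_mat n (Hilbert_Choice.inv \<tau>)) $$ (i, j) = (M $$ (\<tau> i, \<tau> j) :: 'a :: semiring_1)"
proof -
  let ?Q = "perm_mat n (Hilbert_Choice.inv \<tau>) :: 'a mat"
  have "\<tau> i < n" "\<tau> j < n" using permutes_in_image[OF \<tau>] assms(3,4) by simp_all
  have "(perm_mat n \<tau> * M * ?Q) $$ (i, j) = (perm_mat n \<tau> * (M * ?Q)) $$ (i, j)"
    by (simp only: assoc_mult_mat[OF perm_mat_carrier M perm_mat_carrier])
  also have "\<dots> = (M * ?Q) $$ (\<tau> i, j)"
    by (rule index_perm_mat_mult[OF \<tau> mult_carrier_mat[OF M perm_mat_carrier] assms(3,4)])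
  also have "\<dots> = (M * ?Q) $$ (\<tau> i, Hilbert_Choice.inv \<tau> (\<tau> j))"
    by (simp only: permutes_inverses(2)[OF \<tau>])
  also have "\<dots> = M $$ (\<tau> i, \<tau> j)"
    by (rule index_mult_perm_mat[OF permutes_inv[OF \<tau>] M \<open>\<tau> i < n\<close> \<open>\<tau> j < n\<close>])
  finally show ?thesis .
qed

lemma mat_eq_four_block_diag:
  assumes "\<And>i j. i < k \<Longrightarrow> k \<le> j \<Longrightarrow> j < k + l \<Longrightarrow> f (i, j) = 0 \<and> f (j, i) = 0"
  shows "mat (k + l) (k + l) f
    = four_block_mat (mat k k f) (0\<^sub>m k l) (0\<^sub>m l k) (mat l l (\<lambda>(i, j). f (i + k, j + k)))"
  by (rule eq_matI) (auto simp: assms)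

lemma ex_permutes_prefix:
  assumes "S \<subseteq> {..<n}"
  obtains \<tau> where "\<tau> permutes {..<n}" "\<And>i. i < n \<Longrightarrow> \<tau> i \<in> S \<longleftrightarrow> i < card S"
proof -
  define xs where "xs = filter (\<lambda>i. i \<in> S) [0..<n]"
  define ys where "ys = filter (\<lambda>i. i \<notin> S) [0..<n]"
  have "set xs = S" using assms unfolding xs_def by auto
  then have "length xs = card S" using distinct_card[of xs] unfolding xs_def by simp
  have "mset (xs @ ys) = mset [0..<n]"
    unfolding xs_def ys_def mset_append mset_filter by (rule multiset_partition[symmetric])
  then obtain \<tau> where \<tau>: "\<tau> permutes {..<n}" "permute_list \<tau> [0..<n] = xs @ ys"
    by (metis length_upt minus_nat.diff_0 mset_eq_permutation)
  have "\<tau> i = (xs @ ys) ! i" if "i < n" for i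
    using permute_list_nth[of \<tau> "[0..<n]" i] \<tau> permutes_in_image[OF \<tau>(1)] that by simp
  moreover have "(xs @ ys) ! i \<in> S \<longleftrightarrow> i < length xs" if "i < n" for i
  proof -
    have "length (xs @ ys) = n" using \<open>mset (xs @ ys) = mset [0..<n]\<close> by (metis length_upt mset_eq_length minus_nat.diff_0)
    then show ?thesis
      using that nth_mem[of i xs] nth_mem[of "i - length xs" ys]
      by (auto simp: nth_append xs_def ys_def)
  qed
  ultimately show thesis using that \<tau>(1) \<open>length xs = card S\<close> by simp
qed

definition block_diagonal_split :: "'a :: zero mat \<Rightarrow> nat set \<Rightarrow> bool" where
  "block_diagonal_split M S \<longleftrightarrow> S \<noteq> {} \<and> S \<subset> {..<dim_row M} \<and>
     (\<forall>i\<in>S. \<forall>j\<in>{..<dim_row M} - S. M $$ (i, j) = 0 \<and> M $$ (j, i) = 0)"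

lemma index_eq_perm_mat_conj:
  fixes M D Pinv :: "'a :: semiring_1 mat"
  assumes \<sigma>: "\<sigma> permutes {..<n}" and M: "M \<in> carrier_mat n n" and D: "D \<in> carrier_mat n n"
    and inv: "perm_mat n \<sigma> * Pinv = 1\<^sub>m n" and conj: "Pinv * M * perm_mat n \<sigma> = D"
    and "a < n" "b < n"
  shows "M $$ (a, b) = D $$ (\<sigma> a, \<sigma> b)"
proof -
  let ?P = "perm_mat n \<sigma> :: 'a mat"
  have P: "?P \<in> carrier_mat n n" by (rule perm_mat_carrier)
  have "dim_row Pinv = n" "dim_col Pinv = n"
    using arg_cong[OF conj, of dim_row] arg_cong[OF inv, of dim_col] D by auto
  then have Pinv: "Pinv \<in> carrier_mat n n" by auto
  have "M * ?P = ?P * D"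
  proof -
    have "?P * D = ?P * (Pinv * (M * ?P))"
      using conj assoc_mult_mat[OF Pinv M P] by simp
    also have "\<dots> = (?P * Pinv) * (M * ?P)"
      using assoc_mult_mat[OF P Pinv mult_carrier_mat[OF M P]] by simp
    also have "\<dots> = M * ?P"
      using inv left_mult_one_mat[OF mult_carrier_mat[OF M P]] by simp
    finally show ?thesis by simp
  qed
  have "\<sigma> b < n" using permutes_in_image[OF \<sigma>] assms(7) by simp
  have "M $$ (a, b) = (M * ?P) $$ (a, \<sigma> b)"
    using index_mult_perm_mat[OF \<sigma> M assms(6,7)] by simp
  also have "\<dots> = D $$ (\<sigma> a, \<sigma> b)"
    using \<open>M * ?P = ?P * D\<close> index_perm_mat_mult[OF \<sigma> D assms(6) \<open>\<sigma> b < n\<close>] by simp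
  finally show ?thesis .
qed

lemma reducible_mat_imp_block_diagonal_split:
  fixes M :: "'a :: comm_ring_1 mat"
  assumes "reducible_mat M"
  shows "\<exists>S. block_diagonal_split M S"
proof -
  obtain n P Pinv k l B F where M: "M \<in> carrier_mat n n" and P: "permutation_mat n P"
    and inv: "inverts_mat P Pinv" and kl: "0 < k" "0 < l"
    and B: "B \<in> carrier_mat k k" and F: "F \<in> carrier_mat l l"
    and conj: "Pinv * M * P = four_block_mat B (0\<^sub>m k l) (0\<^sub>m l k) F"
    using assms unfolding reducible_mat_def by blast
  define D where "D = four_block_mat B (0\<^sub>m k l) (0\<^sub>m l k) F"
  obtain \<sigma> where \<sigma>: "\<sigma> permutes {..<n}" and P_def: "P = perm_mat n \<sigma>"
    using P unfolding permutation_mat_iff by blast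
  have "n = k + l" using arg_cong[OF conj, of dim_col] B F P_def by simp
  then have D: "D \<in> carrier_mat n n" using B F unfolding D_def by auto
  have "P * Pinv = 1\<^sub>m n" using inv unfolding inverts_mat_def P_def by simp
  then have entry: "M $$ (a, b) = D $$ (\<sigma> a, \<sigma> b)" if "a < n" "b < n" for a b
    using index_eq_perm_mat_conj[OF \<sigma> M D _ _ that] conj P_def D_def by simp
  have off_diagonal: "M $$ (a, b) = 0" if "a < n" "b < n" "\<sigma> a < k \<longleftrightarrow> \<not> \<sigma> b < k" for a b
  proof -
    have "\<sigma> a < k + l" "\<sigma> b < k + l" using permutes_in_image[OF \<sigma>] that(1,2) \<open>n = k + l\<close> by auto
    then show ?thesis using entry[OF that(1,2)] that(3) B F unfolding D_def by auto
  qed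
  define S where "S = {a. a < n \<and> \<sigma> a < k}"
  have inv_lt: "Hilbert_Choice.inv \<sigma> x < n" if "x < n" for x
    using permutes_in_image[OF permutes_inv[OF \<sigma>]] that by simp
  have "Hilbert_Choice.inv \<sigma> 0 \<in> S" "Hilbert_Choice.inv \<sigma> k \<in> {..<n} - S"
    using inv_lt[of 0] inv_lt[of k] kl \<open>n = k + l\<close> permutes_inverses(1)[OF \<sigma>]
    unfolding S_def by simp_all
  then have "S \<noteq> {}" "S \<subset> {..<n}" unfolding S_def by auto
  moreover have "\<forall>a\<in>S. \<forall>b\<in>{..<n} - S. M $$ (a, b) = 0 \<and> M $$ (b, a) = 0"
    using off_diagonal unfolding S_def by auto
  ultimately show ?thesis unfolding block_diagonal_split_def using M by (intro exI[of _ S]) simp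
qed

lemma block_diagonal_split_imp_reducible_mat:
  fixes M :: "'a :: comm_ring_1 mat"
  assumes M: "M \<in> carrier_mat n n" and split: "block_diagonal_split M S"
  shows "reducible_mat M"
proof -
  have S: "S \<noteq> {}" "S \<subset> {..<n}" "\<And>i j. i \<in> S \<Longrightarrow> j \<in> {..<n} - S \<Longrightarrow> M $$ (i, j) = 0 \<and> M $$ (j, i) = 0"
    using split M unfolding block_diagonal_split_def by auto
  define k where "k = card S"
  define l where "l = n - k"
  have "finite S" using S(2) finite_subset by blast
  then have "0 < k" "k < n" using S(1,2) psubset_card_mono[OF _ S(2)] unfolding k_def by auto
  obtain \<tau> where \<tau>: "\<tau> permutes {..<n}" and front: "\<And>i. i < n \<Longrightarrow> \<tau> i \<in> S \<longleftrightarrow> i < k"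
    using ex_permutes_prefix[OF psubset_imp_subset[OF S(2)]] unfolding k_def by blast
  define f where "f = (\<lambda>(i, j). M $$ (\<tau> i, \<tau> j))"
  define P :: "'a mat" where "P = perm_mat n (Hilbert_Choice.inv \<tau>)"
  define Pinv :: "'a mat" where "Pinv = perm_mat n \<tau>"
  have "Pinv * M * P = mat n n f"
  proof (rule eq_matI)
    fix i j assume "i < dim_row (mat n n f)" "j < dim_col (mat n n f)"
    then have "i < n" "j < n" by simp_all
    then show "(Pinv * M * P) $$ (i, j) = mat n n f $$ (i, j)"
      unfolding P_def Pinv_def index_perm_mat_conj[OF \<tau> M \<open>i < n\<close> \<open>j < n\<close>] by (simp add: f_def)
  qed (simp_all add: P_def Pinv_def)
  also have "\<dots> = mat (k + l) (k + l) f" using \<open>k < n\<close> by (simp add: l_def)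
  also have "\<dots> = four_block_mat (mat k k f) (0\<^sub>m k l) (0\<^sub>m l k) (mat l l (\<lambda>(i, j). f (i + k, j + k)))"
  proof (rule mat_eq_four_block_diag)
    fix i j assume "i < k" "k \<le> j" "j < k + l"
    then have "\<tau> i \<in> S" "\<tau> j \<in> {..<n} - S"
      using front[of i] front[of j] permutes_in_image[OF \<tau>, of j] \<open>k < n\<close> by (auto simp: l_def)
    then show "f (i, j) = 0 \<and> f (j, i) = 0" using S(3) by (simp add: f_def)
  qed
  finally have "Pinv * M * P = four_block_mat (mat k k f) (0\<^sub>m k l) (0\<^sub>m l k) (mat l l (\<lambda>(i, j). f (i + k, j + k)))" .
  moreover have "permutation_mat n P"
    unfolding permutation_mat_iff P_def using permutes_inv[OF \<tau>] by blast
  moreover have "inverts_mat P Pinv" "inverts_mat Pinv P"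
    unfolding inverts_mat_def P_def Pinv_def using perm_mat_mult_inv[OF \<tau>] by simp_all
  moreover have "0 < l" using \<open>k < n\<close> by (simp add: l_def)
  ultimately show ?thesis
    unfolding reducible_mat_def using M \<open>0 < k\<close> mat_carrier by blast
qed

lemma reducible_mat_iff_block_diagonal_split:
  fixes M :: "'a :: comm_ring_1 mat"
  assumes "M \<in> carrier_mat n n"
  shows "reducible_mat M \<longleftrightarrow> (\<exists>S. block_diagonal_split M S)"
  using assms reducible_mat_imp_block_diagonal_split block_diagonal_split_imp_reducible_mat by blast

lemma ex_partition_bij_betw_iff:
  assumes "bij_betw f A B"
  shows "(\<exists>S. S \<noteq> {} \<and> S \<subset> A \<and> (\<forall>i\<in>S. \<forall>j\<in>A - S. R (f i) (f j))) \<longleftrightarrow>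
    (\<exists>B1 B2. B1 \<noteq> {} \<and> B2 \<noteq> {} \<and> B1 \<inter> B2 = {} \<and> B1 \<union> B2 = B \<and> (\<forall>x\<in>B1. \<forall>y\<in>B2. R x y))"
proof
  assume "\<exists>S. S \<noteq> {} \<and> S \<subset> A \<and> (\<forall>i\<in>S. \<forall>j\<in>A - S. R (f i) (f j))"
  then obtain S where S: "S \<noteq> {}" "S \<subset> A" "\<forall>i\<in>S. \<forall>j\<in>A - S. R (f i) (f j)" by blast
  have "f ` S \<inter> f ` (A - S) = {}" "f ` S \<union> f ` (A - S) = B"
    using assms S(2) unfolding bij_betw_def inj_on_def by auto
  then show "\<exists>B1 B2. B1 \<noteq> {} \<and> B2 \<noteq> {} \<and> B1 \<inter> B2 = {} \<and> B1 \<union> B2 = B \<and> (\<forall>x\<in>B1. \<forall>y\<in>B2. R x y)"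
    using S by (intro exI[of _ "f ` S"] exI[of _ "f ` (A - S)"]) auto
next
  assume "\<exists>B1 B2. B1 \<noteq> {} \<and> B2 \<noteq> {} \<and> B1 \<inter> B2 = {} \<and> B1 \<union> B2 = B \<and> (\<forall>x\<in>B1. \<forall>y\<in>B2. R x y)"
  then obtain B1 B2 where B: "B1 \<noteq> {}" "B2 \<noteq> {}" "B1 \<inter> B2 = {}" "B1 \<union> B2 = B" "\<forall>x\<in>B1. \<forall>y\<in>B2. R x y"
    by blast
  define S where "S = {i \<in> A. f i \<in> B1}"
  have "f ` A = B" using assms by (simp add: bij_betw_def)
  then have compl: "A - S = {i \<in> A. f i \<in> B2}" using B(3,4) unfolding S_def by auto
  have "f ` S = B1" "f ` (A - S) = B2"
    using \<open>f ` A = B\<close> B(4) compl unfolding S_def by (auto simp: image_iff)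
  then have "S \<noteq> {}" "S \<subset> A" using B(1,2) unfolding S_def by auto
  moreover have "\<forall>i\<in>S. \<forall>j\<in>A - S. R (f i) (f j)"
    using B(5) compl unfolding S_def by simp
  ultimately show "\<exists>S. S \<noteq> {} \<and> S \<subset> A \<and> (\<forall>i\<in>S. \<forall>j\<in>A - S. R (f i) (f j))"
    by blast
qed

lemma tri_rel_sym: "tri_rel E e e' \<longleftrightarrow> tri_rel E e' e"
  unfolding tri_rel_def by blast

lemma helm_entry_sym: "helm_entry E e e' = helm_entry E e' e"
  unfolding helm_entry_def head_tail_def same_end_def by (auto simp: tri_rel_sym)

lemma helm_entry_eq_0_iff:
  assumes "e \<noteq> e'"
  shows "helm_entry E e e' = 0 \<longleftrightarrow> tri_rel E e e' \<or> {fst e, snd e} \<inter> {fst e', snd e'} = {}"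
  using assms unfolding helm_entry_def head_tail_def same_end_def by auto

lemma block_diagonal_split_helmholtzian_iff:
  assumes "distinct es"
  shows "block_diagonal_split (helmholtzian E es) S \<longleftrightarrow> S \<noteq> {} \<and> S \<subset> {..<length es} \<and>
    (\<forall>i\<in>S. \<forall>j\<in>{..<length es} - S. tri_rel E (es ! i) (es ! j) \<or>
       {fst (es ! i), snd (es ! i)} \<inter> {fst (es ! j), snd (es ! j)} = {})"
proof -
  let ?H = "helmholtzian E es"
  have entry: "?H $$ (i, j) = 0 \<and> ?H $$ (j, i) = 0 \<longleftrightarrow>
      tri_rel E (es ! i) (es ! j) \<or> {fst (es ! i), snd (es ! i)} \<inter> {fst (es ! j), snd (es ! j)} = {}"
    if "i < length es" "j < length es" "i \<noteq> j" for i j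
  proof -
    have "?H $$ (i, j) = helm_entry E (es ! i) (es ! j)" "?H $$ (j, i) = helm_entry E (es ! i) (es ! j)"
      using that helm_entry_sym[of E "es ! j"] by (simp_all add: helmholtzian_def)
    moreover have "es ! i \<noteq> es ! j" using that assms by (simp add: nth_eq_iff_index_eq)
    ultimately show ?thesis using helm_entry_eq_0_iff by simp
  qed
  have body: "(\<forall>i\<in>S. \<forall>j\<in>{..<length es} - S. ?H $$ (i, j) = 0 \<and> ?H $$ (j, i) = 0) \<longleftrightarrow>
      (\<forall>i\<in>S. \<forall>j\<in>{..<length es} - S. tri_rel E (es ! i) (es ! j) \<or>
         {fst (es ! i), snd (es ! i)} \<inter> {fst (es ! j), snd (es ! j)} = {})"
    if "S \<subset> {..<length es}"
    using that by (intro ball_cong refl entry) auto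
  have dim: "dim_row ?H = length es" by (simp add: helmholtzian_def)
  show ?thesis unfolding block_diagonal_split_def dim by (intro conj_cong refl) (erule body)
qed

theorem proposition3p1:
  fixes V :: "'v set" and E :: "('v \<times> 'v) set" and es :: "('v \<times> 'v) list"
  assumes "oriented_simple_graph V E"
    and "E \<noteq> {}"
    and "distinct es" and "set es = E"
  shows "reducible_mat (helmholtzian E es) \<longleftrightarrow>
    (\<exists>E1 E2. E1 \<noteq> {} \<and> E2 \<noteq> {} \<and> E1 \<inter> E2 = {} \<and> E1 \<union> E2 = E \<and>
       (\<forall>e1\<in>E1. \<forall>e2\<in>E2. tri_rel E e1 e2 \<or> {fst e1, snd e1} \<inter> {fst e2, snd e2} = {}))"
proof -
  have "reducible_mat (helmholtzian E es) \<longleftrightarrow> (\<exists>S. block_diagonal_split (helmholtzian E es) S)"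
    by (rule reducible_mat_iff_block_diagonal_split[of _ "length es"]) (simp add: helmholtzian_def)
  also have "\<dots> \<longleftrightarrow> (\<exists>S. S \<noteq> {} \<and> S \<subset> {..<length es} \<and>
      (\<forall>i\<in>S. \<forall>j\<in>{..<length es} - S. tri_rel E (es ! i) (es ! j) \<or>
         {fst (es ! i), snd (es ! i)} \<inter> {fst (es ! j), snd (es ! j)} = {}))"
    by (simp only: block_diagonal_split_helmholtzian_iff[OF assms(3)])
  also have "\<dots> \<longleftrightarrow> (\<exists>E1 E2. E1 \<noteq> {} \<and> E2 \<noteq> {} \<and> E1 \<inter> E2 = {} \<and> E1 \<union> E2 = E \<and>
      (\<forall>e1\<in>E1. \<forall>e2\<in>E2. tri_rel E e1 e2 \<or> {fst e1, snd e1} \<inter> {fst e2, snd e2} = {}))"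
    by (rule ex_partition_bij_betw_iff[OF bij_betw_nth[OF assms(3) refl assms(4)[symmetric]],
          where R = "\<lambda>e1 e2. tri_rel E e1 e2 \<or> {fst e1, snd e1} \<inter> {fst e2, snd e2} = {}"])
  finally show ?thesis .
qed

end
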